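(* Let $R$ be a ring and $x\in R$ a nonunit. Then $x$ is a parameter on $R$ if and only if $\operatorname{ht}xR\ge1$ and $(0:x^n)=(0:x^{n+1})$ for some $n\ge1$.
   Context: All rings are commutative with identity. A parameter on $R$ is a parameter sequence of length one: an element $x$ such that (1) $x$ is weakly proregular, meaning there is $n\ge1$ with $(0:_Rx^n)=(0:_Rx^{n+1})$ (equivalently, for every $n$ there is $m\ge n$ such that the map $(0:_Rx^m)\to(0:_Rx^n)$, $r\mapsto x^{m-n}r$, is zero), (2) $xR\neq R$, and (3) $H^1_x(R)_p\neq0$ for all primes $p\supseteq xR$, where $H^1_x(R)=R_x/\operatorname{im}(R\to R_x)$. *)

theory Defs
  imports Main "HOL-Library.Extended_Nat"
begin

definition principal_ideal :: "'a::comm_ring_1 \<Rightarrow> 'a set" where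
  "principal_ideal x = {x * r | r. True}"

definition annihilator :: "'a::comm_ring_1 \<Rightarrow> 'a set" where
  "annihilator a = {r. r * a = 0}"

definition prime_ideal :: "'a::comm_ring_1 set \<Rightarrow> bool" where
  "prime_ideal P \<longleftrightarrow>
     0 \<in> P \<and> (\<forall>a\<in>P. \<forall>b\<in>P. a + b \<in> P) \<and> (\<forall>r. \<forall>a\<in>P. r * a \<in> P) \<and>
     1 \<notin> P \<and> (\<forall>a b. a * b \<in> P \<longrightarrow> a \<in> P \<or> b \<in> P)"

definition prime_height :: "'a::comm_ring_1 set \<Rightarrow> enat" where
  "prime_height P = (SUP n \<in> {n. \<exists>c :: nat \<Rightarrow> 'a set.
       (\<forall>i\<le>n. prime_ideal (c i)) \<and> (\<forall>i<n. c i \<subset> c (Suc i)) \<and> c n = P}. enat n)"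

definition ideal_height :: "'a::comm_ring_1 set \<Rightarrow> enat" where
  "ideal_height I = (INF P \<in> {P. prime_ideal P \<and> I \<subseteq> P}. prime_height P)"

definition weakly_proregular :: "'a::comm_ring_1 \<Rightarrow> bool" where
  "weakly_proregular x \<longleftrightarrow> (\<exists>n\<ge>1. annihilator (x ^ n) = annihilator (x ^ (n + 1)))"

text \<open>The fraction a / x^k of R_x lies in the image of R \<rightarrow> R_x
  (a/x^k = b/1 in R_x iff x^m (a - x^k b) = 0 for some m).\<close>
definition frac_in_image :: "'a::comm_ring_1 \<Rightarrow> 'a \<Rightarrow> nat \<Rightarrow> bool" where
  "frac_in_image x a k \<longleftrightarrow> (\<exists>b m. x ^ m * (a - x ^ k * b) = 0)"

text \<open>H^1_x(R)_p \<noteq> 0, with H^1_x(R) = R_x / im(R \<rightarrow> R_x): some class [a/x^k] is not killed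
  by any t outside p.\<close>
definition H1_loc_nonzero :: "'a::comm_ring_1 \<Rightarrow> 'a set \<Rightarrow> bool" where
  "H1_loc_nonzero x p \<longleftrightarrow> (\<exists>a k. \<forall>t. t \<notin> p \<longrightarrow> \<not> frac_in_image x (t * a) k)"

definition is_parameter :: "'a::comm_ring_1 \<Rightarrow> bool" where
  "is_parameter x \<longleftrightarrow> weakly_proregular x \<and> principal_ideal x \<noteq> UNIV \<and>
     (\<forall>p. prime_ideal p \<and> principal_ideal x \<subseteq> p \<longrightarrow> H1_loc_nonzero x p)"

end

(*
  Both sides of the equivalence are statements about the primes p containing x.

  H^1_x(R)_p is nonzero iff some prime q contained in p misses x. If the class of a/x^k
  survives in H^1_x(R)_p, then no t x^m with t outside p vanishes (it would kill that class),
  so Krull's lemma yields a prime q disjoint from the multiplicative set (R - p) x^N.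
  Conversely, given such q, the class of 1/x survives: x^m (t - x b) = 0 forces t into q + xR,
  which lies in p.

  ht xR >= 1 says that no prime containing x is minimal; since every prime contains a minimal
  prime (Zorn), this again means that every prime p containing x contains a prime missing x.
  Weak proregularity and xR /= R are the remaining conditions verbatim.
*)
theory Submission
  imports Defs
begin

definition ideal :: "'a::comm_ring_1 set \<Rightarrow> bool" where
  "ideal I \<longleftrightarrow> 0 \<in> I \<and> (\<forall>a\<in>I. \<forall>b\<in>I. a + b \<in> I) \<and> (\<forall>r. \<forall>a\<in>I. r * a \<in> I)"

lemma ideal_zero: "ideal I \<Longrightarrow> 0 \<in> I"
  by (simp add: ideal_def)

lemma ideal_add: "ideal I \<Longrightarrow> a \<in> I \<Longrightarrow> b \<in> I \<Longrightarrow> a + b \<in> I"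
  by (simp add: ideal_def)

lemma ideal_mult_left: "ideal I \<Longrightarrow> a \<in> I \<Longrightarrow> r * a \<in> I"
  by (simp add: ideal_def)

lemma ideal_mult_right: "ideal I \<Longrightarrow> a \<in> I \<Longrightarrow> a * r \<in> I"
  using ideal_mult_left[of I a r] by (simp add: mult.commute)

lemma prime_ideal_iff:
  "prime_ideal P \<longleftrightarrow> ideal P \<and> 1 \<notin> P \<and> (\<forall>a b. a * b \<in> P \<longrightarrow> a \<in> P \<or> b \<in> P)"
  by (auto simp: prime_ideal_def ideal_def)

lemma prime_idealD:
  assumes "prime_ideal P"
  shows prime_ideal_imp_ideal: "ideal P"
    and prime_ideal_one_notin: "1 \<notin> P"
    and prime_ideal_mult_notin: "a \<notin> P \<Longrightarrow> b \<notin> P \<Longrightarrow> a * b \<notin> P"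
  using assms by (auto simp: prime_ideal_iff)

lemma prime_ideal_power_notin:
  assumes "prime_ideal P" "x \<notin> P"
  shows "x ^ n \<notin> P"
  by (induction n) (simp_all add: assms prime_idealD)

lemma principal_ideal_subset_iff:
  assumes "ideal I"
  shows "principal_ideal x \<subseteq> I \<longleftrightarrow> x \<in> I"
proof
  have "x \<in> principal_ideal x"
    unfolding principal_ideal_def by (rule CollectI, rule exI[of _ 1]) simp
  then show "x \<in> I" if "principal_ideal x \<subseteq> I"
    using that by blast
  show "principal_ideal x \<subseteq> I" if "x \<in> I"
    using that assms by (auto simp: principal_ideal_def ideal_mult_right)
qed

lemma principal_ideal_eq_UNIV_iff: "principal_ideal x = UNIV \<longleftrightarrow> x dvd 1"
proof
  assume "principal_ideal x = UNIV"
  then obtain r where "1 = x * r"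
    unfolding principal_ideal_def by blast
  then show "x dvd 1" ..
next
  assume "x dvd 1"
  then obtain u where u: "1 = x * u" ..
  have "r \<in> principal_ideal x" for r
  proof -
    have "r = x * (u * r)"
      by (simp add: mult.assoc[symmetric] u[symmetric])
    then show ?thesis
      unfolding principal_ideal_def by blast
  qed
  then show "principal_ideal x = UNIV"
    by blast
qed

subsection \<open>Krull's lemma: primes avoiding a multiplicative set\<close>

lemma ideal_Union_chain:
  assumes "C \<noteq> {}" "\<forall>I\<in>C. ideal I" "\<forall>I\<in>C. \<forall>J\<in>C. I \<subseteq> J \<or> J \<subseteq> I"
  shows "ideal (\<Union>C)"
  unfolding ideal_def
proof (intro conjI ballI allI)
  show "0 \<in> \<Union>C"
    using assms(1,2) ideal_zero by blast
  show "r * a \<in> \<Union>C" if "a \<in> \<Union>C" for r a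
    using that assms(2) ideal_mult_left by blast
  show "a + b \<in> \<Union>C" if ab: "a \<in> \<Union>C" "b \<in> \<Union>C" for a b
  proof -
    obtain I J where "I \<in> C" "J \<in> C" "a \<in> I" "b \<in> J"
      using ab by blast
    then show ?thesis
      using assms(2,3) ideal_add by (metis UnionI subsetD)
  qed
qed

lemma ideal_sum_principal:
  assumes "ideal M"
  shows "ideal {m + a * r | m r. m \<in> M}"
  unfolding ideal_def
proof (intro conjI ballI allI)
  have "0 = 0 + a * 0"
    by simp
  then show "0 \<in> {m + a * r | m r. m \<in> M}"
    using ideal_zero[OF assms] by blast
  show "u + v \<in> {m + a * r | m r. m \<in> M}" if uv: "u \<in> {m + a * r | m r. m \<in> M}"
    "v \<in> {m + a * r | m r. m \<in> M}" for u v
  proof -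
    obtain m1 r1 m2 r2 where "u = m1 + a * r1" "v = m2 + a * r2" "m1 \<in> M" "m2 \<in> M"
      using uv by blast
    then have "u + v = (m1 + m2) + a * (r1 + r2)" "m1 + m2 \<in> M"
      using ideal_add[OF assms] by (simp_all add: algebra_simps)
    then show ?thesis by blast
  qed
  show "s * u \<in> {m + a * r | m r. m \<in> M}" if u: "u \<in> {m + a * r | m r. m \<in> M}" for s u
  proof -
    obtain m r where "u = m + a * r" "m \<in> M"
      using u by blast
    then have "s * u = s * m + a * (s * r)" "s * m \<in> M"
      using ideal_mult_left[OF assms] by (simp_all add: algebra_simps)
    then show ?thesis by blast
  qed
qed

lemma maximal_disjoint_ideal_is_prime:
  assumes M: "ideal M" "M \<inter> S = {}"
    and S: "1 \<in> S" "\<And>s t. s \<in> S \<Longrightarrow> t \<in> S \<Longrightarrow> s * t \<in> S"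
    and maximal: "\<And>J. ideal J \<Longrightarrow> M \<subseteq> J \<Longrightarrow> J \<inter> S = {} \<Longrightarrow> J = M"
  shows "prime_ideal M"
proof -
  have meets_S: "\<exists>m r. m \<in> M \<and> m + a * r \<in> S" if "a \<notin> M" for a
  proof -
    let ?J = "{m + a * r | m r. m \<in> M}"
    have "m = m + a * 0" for m
      by simp
    then have "M \<subseteq> ?J"
      by blast
    moreover have "a = 0 + a * 1"
      by simp
    then have "a \<in> ?J"
      using ideal_zero[OF M(1)] by blast
    ultimately have "?J \<inter> S \<noteq> {}"
      using maximal[OF ideal_sum_principal[OF M(1)]] that by blast
    then show ?thesis by blast
  qed
  have "a \<in> M \<or> b \<in> M" if "a * b \<in> M" for a b
  proof (rule ccontr)
    assume "\<not> (a \<in> M \<or> b \<in> M)"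
    then obtain m1 r1 m2 r2 where m: "m1 \<in> M" "m2 \<in> M"
      and S_elems: "m1 + a * r1 \<in> S" "m2 + b * r2 \<in> S"
      using meets_S by meson
    have "(m1 + a * r1) * (m2 + b * r2) = (m2 + b * r2) * m1 + (r1 * a) * m2 + (r1 * r2) * (a * b)"
      by (simp add: algebra_simps)
    then have "(m1 + a * r1) * (m2 + b * r2) \<in> M"
      using m that ideal_add[OF M(1)] ideal_mult_left[OF M(1)] by presburger
    then show False
      using S(2)[OF S_elems] M(2) by blast
  qed
  then show ?thesis
    using M S(1) by (auto simp: prime_ideal_iff)
qed

lemma exists_prime_ideal_disjoint:
  fixes S :: "'a::comm_ring_1 set"
  assumes "1 \<in> S" "0 \<notin> S" "\<And>s t. s \<in> S \<Longrightarrow> t \<in> S \<Longrightarrow> s * t \<in> S"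
  shows "\<exists>Q. prime_ideal Q \<and> Q \<inter> S = {}"
proof -
  let ?A = "{I. ideal I \<and> I \<inter> S = {}}"
  have "\<exists>M\<in>?A. \<forall>J\<in>?A. M \<subseteq> J \<longrightarrow> J = M"
  proof (rule subset_Zorn_nonempty)
    show "?A \<noteq> {}"
      using assms(2) by (auto simp: ideal_def intro!: exI[of _ "{0}"])
    fix C assume "C \<noteq> {}" "subset.chain ?A C"
    then have "ideal (\<Union>C)" "\<Union>C \<inter> S = {}"
      unfolding subset_chain_def by (blast intro: ideal_Union_chain)+
    then show "\<Union>C \<in> ?A"
      by simp
  qed
  then obtain M where M: "ideal M" "M \<inter> S = {}"
    and maximal: "\<And>J. ideal J \<Longrightarrow> M \<subseteq> J \<Longrightarrow> J \<inter> S = {} \<Longrightarrow> J = M"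
    by auto
  have "prime_ideal M"
    by (rule maximal_disjoint_ideal_is_prime[OF M assms(1,3) maximal])
  with M(2) show ?thesis
    by blast
qed

subsection \<open>Minimal primes\<close>

lemma prime_ideal_Inter_chain:
  assumes "C \<noteq> {}" "\<forall>P\<in>C. prime_ideal P" "\<forall>P\<in>C. \<forall>Q\<in>C. P \<subseteq> Q \<or> Q \<subseteq> P"
  shows "prime_ideal (\<Inter>C)"
proof -
  have "ideal (\<Inter>C)"
    using assms(2) by (auto simp: ideal_def prime_ideal_def)
  moreover have "1 \<notin> \<Inter>C"
    using assms(1,2) prime_ideal_one_notin by blast
  moreover have "a \<in> \<Inter>C \<or> b \<in> \<Inter>C" if "a * b \<in> \<Inter>C" for a b
  proof (rule ccontr)
    assume "\<not> (a \<in> \<Inter>C \<or> b \<in> \<Inter>C)"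
    then obtain P Q where "P \<in> C" "Q \<in> C" "a \<notin> P" "b \<notin> Q"
      by blast
    moreover have "P \<subseteq> Q \<or> Q \<subseteq> P"
      using \<open>P \<in> C\<close> \<open>Q \<in> C\<close> assms(3) by blast
    ultimately obtain R where "R \<in> C" "a \<notin> R" "b \<notin> R"
      by blast
    then show False
      using that assms(2) prime_ideal_mult_notin by blast
  qed
  ultimately show ?thesis
    by (simp add: prime_ideal_iff)
qed

lemma exists_minimal_prime_ideal_below:
  assumes "prime_ideal p"
  shows "\<exists>q. prime_ideal q \<and> q \<subseteq> p \<and> (\<forall>q'. prime_ideal q' \<longrightarrow> \<not> q' \<subset> q)"
proof -
  \<comment> \<open>Zorn's lemma for the reverse inclusion, applied to the complements of the primes below p\<close>
  let ?A = "uminus ` {q. prime_ideal q \<and> q \<subseteq> p}"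
  have "\<exists>M\<in>?A. \<forall>X\<in>?A. M \<subseteq> X \<longrightarrow> X = M"
  proof (rule subset_Zorn_nonempty)
    show "?A \<noteq> {}"
      using assms by blast
    fix C assume "C \<noteq> {}" "subset.chain ?A C"
    then have nonempty: "uminus ` C \<noteq> {}" and primes: "\<forall>q\<in>uminus ` C. prime_ideal q"
      and below: "\<forall>q\<in>uminus ` C. q \<subseteq> p"
      and chain: "\<forall>q\<in>uminus ` C. \<forall>q'\<in>uminus ` C. q \<subseteq> q' \<or> q' \<subseteq> q"
      unfolding subset_chain_def by (auto simp: image_iff)
    have "prime_ideal (\<Inter>(uminus ` C))"
      using nonempty primes chain by (rule prime_ideal_Inter_chain)
    moreover have "\<Inter>(uminus ` C) \<subseteq> p"
      using nonempty below by blast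
    moreover have "\<Union>C = - \<Inter>(uminus ` C)"
      by auto
    ultimately show "\<Union>C \<in> ?A"
      by (intro image_eqI) simp_all
  qed
  then obtain q where q: "prime_ideal q" "q \<subseteq> p"
    and maximal: "\<And>q'. prime_ideal q' \<Longrightarrow> q' \<subseteq> p \<Longrightarrow> - q \<subseteq> - q' \<Longrightarrow> q' = q"
    by auto
  have "\<not> q' \<subset> q" if "prime_ideal q'" for q'
    using maximal[OF that] q(2) by blast
  with q show ?thesis
    by blast
qed

subsection \<open>Height one\<close>

lemma one_le_prime_height_iff:
  fixes P :: "'a::comm_ring_1 set"
  assumes "prime_ideal P"
  shows "1 \<le> prime_height P \<longleftrightarrow> (\<exists>Q. prime_ideal Q \<and> Q \<subset> P)"
proof
  assume "\<exists>Q. prime_ideal Q \<and> Q \<subset> P"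
  then obtain Q where "prime_ideal Q" "Q \<subset> P"
    by blast
  then have "\<exists>c :: nat \<Rightarrow> 'a set. (\<forall>i\<le>1. prime_ideal (c i)) \<and> (\<forall>i<1. c i \<subset> c (Suc i)) \<and> c 1 = P"
    using assms by (intro exI[of _ "\<lambda>i. if i = 0 then Q else P"]) auto
  then have "enat 1 \<le> prime_height P"
    unfolding prime_height_def by (intro SUP_upper) simp
  then show "1 \<le> prime_height P"
    by (simp add: one_enat_def)
next
  assume "1 \<le> prime_height P"
  show "\<exists>Q. prime_ideal Q \<and> Q \<subset> P"
  proof (rule ccontr)
    assume no_smaller: "\<not> (\<exists>Q. prime_ideal Q \<and> Q \<subset> P)"
    have "prime_height P \<le> 0"
      unfolding prime_height_def
    proof (intro SUP_least, elim CollectE exE conjE)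
      fix n and c :: "nat \<Rightarrow> 'a set"
      assume c: "\<forall>i\<le>n. prime_ideal (c i)" "\<forall>i<n. c i \<subset> c (Suc i)" "c n = P"
      show "enat n \<le> 0"
      proof (cases n)
        case (Suc k)
        then have "prime_ideal (c k)" "c k \<subset> P"
          using c by auto
        with no_smaller show ?thesis
          by blast
      qed (simp add: zero_enat_def)
    qed
    with \<open>1 \<le> prime_height P\<close> show False
      by simp
  qed
qed

lemma one_le_ideal_height_iff:
  "1 \<le> ideal_height I \<longleftrightarrow>
     (\<forall>P. prime_ideal P \<and> I \<subseteq> P \<longrightarrow> (\<exists>Q. prime_ideal Q \<and> Q \<subseteq> P \<and> \<not> I \<subseteq> Q))"
proof -
  have height: "1 \<le> ideal_height I \<longleftrightarrow> (\<forall>P. prime_ideal P \<and> I \<subseteq> P \<longrightarrow> 1 \<le> prime_height P)"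
    unfolding ideal_height_def le_INF_iff Ball_def mem_Collect_eq by (rule refl)
  show ?thesis
  proof (intro iffI allI impI)
    fix P assume "1 \<le> ideal_height I" and P: "prime_ideal P \<and> I \<subseteq> P"
    obtain Q where Q: "prime_ideal Q" "Q \<subseteq> P" "\<forall>Q'. prime_ideal Q' \<longrightarrow> \<not> Q' \<subset> Q"
      using exists_minimal_prime_ideal_below P by blast
    then have "\<not> 1 \<le> prime_height Q"
      by (simp add: one_le_prime_height_iff)
    then have "\<not> I \<subseteq> Q"
      using height[THEN iffD1, OF \<open>1 \<le> ideal_height I\<close>] Q(1) by blast
    with Q show "\<exists>Q. prime_ideal Q \<and> Q \<subseteq> P \<and> \<not> I \<subseteq> Q"
      by blast
  next
    assume below: "\<forall>P. prime_ideal P \<and> I \<subseteq> P \<longrightarrow> (\<exists>Q. prime_ideal Q \<and> Q \<subseteq> P \<and> \<not> I \<subseteq> Q)"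
    have "1 \<le> prime_height P" if P: "prime_ideal P" "I \<subseteq> P" for P
    proof -
      obtain Q where "prime_ideal Q" "Q \<subseteq> P" "\<not> I \<subseteq> Q"
        using below[rule_format, OF conjI[OF P]] by blast
      then have "prime_ideal Q \<and> Q \<subset> P"
        using P(2) by blast
      then show ?thesis
        using one_le_prime_height_iff[OF P(1)] by blast
    qed
    then show "1 \<le> ideal_height I"
      by (simp add: height)
  qed
qed

subsection \<open>Nonvanishing of the local cohomology\<close>

lemma H1_loc_nonzero_imp_prime_below:
  assumes P: "prime_ideal P" and "H1_loc_nonzero x P"
  shows "\<exists>Q. prime_ideal Q \<and> Q \<subseteq> P \<and> x \<notin> Q"
proof -
  obtain a k where not_in_image: "\<And>t. t \<notin> P \<Longrightarrow> \<not> frac_in_image x (t * a) k"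
    using assms(2) unfolding H1_loc_nonzero_def by blast
  define S where "S = {t * x ^ m | t m. t \<notin> P}"
  have in_S: "t * x ^ m \<in> S" if "t \<notin> P" for t m
    using that unfolding S_def by blast
  have "1 \<in> S"
    using in_S[of 1 0] prime_ideal_one_notin[OF P] by simp
  moreover have "0 \<notin> S"
  proof
    assume "0 \<in> S"
    then obtain t m where "t \<notin> P" "t * x ^ m = 0"
      unfolding S_def by auto
    \<comment> \<open>then the class of t a / x^k vanishes already in R_x\<close>
    then have "x ^ m * (t * a - x ^ k * 0) = 0"
      by (simp add: algebra_simps)
    with \<open>t \<notin> P\<close> show False
      using not_in_image unfolding frac_in_image_def by blast
  qed
  moreover have "s * s' \<in> S" if "s \<in> S" "s' \<in> S" for s s'
  proof -
    obtain t m t' m' where "s = t * x ^ m" "s' = t' * x ^ m'" "t \<notin> P" "t' \<notin> P"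
      using \<open>s \<in> S\<close> \<open>s' \<in> S\<close> unfolding S_def by blast
    then have "s * s' = (t * t') * x ^ (m + m')" "t * t' \<notin> P"
      using prime_ideal_mult_notin[OF P] by (simp_all add: algebra_simps power_add)
    then show ?thesis
      using in_S by simp
  qed
  ultimately obtain Q where Q: "prime_ideal Q" "Q \<inter> S = {}"
    using exists_prime_ideal_disjoint by blast
  have "Q \<subseteq> P"
    using Q(2) in_S[of _ 0] by auto
  moreover have "x \<notin> Q"
    using Q(2) in_S[of 1 1] prime_ideal_one_notin[OF P] by auto
  ultimately show ?thesis
    using Q(1) by blast
qed

lemma H1_loc_nonzero_if_prime_below:
  assumes p: "prime_ideal p" "x \<in> p" and q: "prime_ideal q" "q \<subseteq> p" "x \<notin> q"
  shows "H1_loc_nonzero x p"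
  unfolding H1_loc_nonzero_def
proof (intro exI allI impI)
  \<comment> \<open>the class of 1 / x survives localization at p\<close>
  fix t assume "t \<notin> p"
  show "\<not> frac_in_image x (t * 1) 1"
  proof
    assume "frac_in_image x (t * 1) 1"
    then obtain b m where "x ^ m * (t - x * b) = 0"
      unfolding frac_in_image_def by auto
    then have "x ^ m * (t - x * b) \<in> q"
      using ideal_zero[OF prime_ideal_imp_ideal[OF q(1)]] by simp
    then have "t - x * b \<in> p"
      using q prime_ideal_power_notin prime_ideal_mult_notin by blast
    then have "(t - x * b) + x * b \<in> p"
      using prime_ideal_imp_ideal[OF p(1)] p(2) ideal_add ideal_mult_right by blast
    with \<open>t \<notin> p\<close> show False
      by simp
  qed
qed

theorem corollary3p4:
  fixes x :: "'a::comm_ring_1"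
  assumes "\<not> x dvd 1"
  shows "is_parameter x \<longleftrightarrow>
           ideal_height (principal_ideal x) \<ge> 1 \<and>
           (\<exists>n\<ge>1. annihilator (x ^ n) = annihilator (x ^ (n + 1)))"
proof -
  have over_x: "principal_ideal x \<subseteq> p \<longleftrightarrow> x \<in> p" if "prime_ideal p" for p
    using principal_ideal_subset_iff[OF prime_ideal_imp_ideal[OF that]] .
  have H1_iff: "H1_loc_nonzero x p \<longleftrightarrow> (\<exists>q. prime_ideal q \<and> q \<subseteq> p \<and> x \<notin> q)"
    if "prime_ideal p" "x \<in> p" for p
    using H1_loc_nonzero_imp_prime_below[OF that(1)] H1_loc_nonzero_if_prime_below[OF that]
    by blast
  have "1 \<le> ideal_height (principal_ideal x) \<longleftrightarrow>
      (\<forall>p. prime_ideal p \<and> x \<in> p \<longrightarrow> (\<exists>q. prime_ideal q \<and> q \<subseteq> p \<and> x \<notin> q))"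
    unfolding one_le_ideal_height_iff by (simp add: over_x cong: conj_cong)
  also have "\<dots> \<longleftrightarrow> (\<forall>p. prime_ideal p \<and> principal_ideal x \<subseteq> p \<longrightarrow> H1_loc_nonzero x p)"
    by (simp add: over_x H1_iff cong: conj_cong)
  finally have height: "1 \<le> ideal_height (principal_ideal x) \<longleftrightarrow>
      (\<forall>p. prime_ideal p \<and> principal_ideal x \<subseteq> p \<longrightarrow> H1_loc_nonzero x p)" .
  have "principal_ideal x \<noteq> UNIV"
    using assms by (simp add: principal_ideal_eq_UNIV_iff)
  then show ?thesis
    unfolding is_parameter_def weakly_proregular_def height by blast
qed

end
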